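(* Let $q$ be a power of the prime $p$, $n$ a positive integer, $a\in\mathbb{F}_q$ with $a^n=1$, and $\delta\in\mathbb{F}_{q^n}$ nonzero with $\delta^q=a\delta$. Let $L_{g_a}(x)=x^{q^{n-1}}+a x^{q^{n-2}}+\cdots+a^{n-1}x$ (the linearized $q$-associate of $g_a(x)=\frac{x^n-1}{x-a}$). Let $f(x)=\sum_{i=0}^m a_i x^i\in\mathbb{F}_{q^n}[x]$, $h\in\mathbb{F}_q[x]$, and $k\in\mathbb{F}_{q^n}[x]$ with $k(\delta\mathbb{F}_q)\subseteq\mathbb{F}_q^*$, and let $P(x)=f(L_{g_a}(x))+k(L_{g_a}(x))\cdot L_h(x)$. Then $P$ is a permutation polynomial of $\mathbb{F}_{q^n}$ if and only if: (1) $\gcd\left(h(x),\frac{x^n-1}{x-a}\right)=1$; and (2) $\bar{Q}_a(x)=\frac{1}{a}\sum_{i=0}^m\mathrm{Tr}_{q^n/q}(\delta^{i-1}a_i)x^i+k(\delta x)h(a)x$ induces a permutation of $\mathbb{F}_q$. Moreover, in this case, if $R$ induces the inverse permutation of $\bar{Q}_a$ on $\mathbb{F}_q$, then the inverse of the permutation of $\mathbb{F}_{q^n}$ induced by $P$ is induced by $$P_0(x)=F(\delta^{-1}L_{g_a}(x))+k(\delta R(\delta^{-1}L_{g_a}(x)))^{q-2}\cdot L_H(x),$$ where $H\in\mathbb{F}_q[x]$ and $F\in\mathbb{F}_{q^n}[x]$ are as follows: (i) if $p\mid n$: $H$ is the unique polynomial of degree at most $n-1$ with $h(x)H(x)\equiv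 1\pmod{x^n-1}$ (such $H$ exists, since when $p\mid n$ condition (1) is equivalent to $\gcd(h(x),x^n-1)=1$), and $F$ is any polynomial with $F(x)\equiv -k(\delta R(x))^{q-2}\cdot L_H(f(\delta R(x)))\pmod{x^q-x}$; (ii) if $p\nmid n$: $H$ is the unique polynomial of degree at most $n-2$ with $h(x)H(x)\equiv 1\pmod{\frac{x^n-1}{x-a}}$, and $F$ is any polynomial with $F(x)\equiv M(\delta R(x))\pmod{x^q-x}$, where $M(x)=-k(x)^{q-2}\cdot L_H(f(x))+a x\cdot\frac{1-h(a)H(a)}{n}$.
   Context: For $u(x)=\sum_{i=0}^m c_i x^i\in\mathbb{F}_q[x]$, its linearized $q$-associate is $L_u(x)=\sum_{i=0}^m c_i x^{q^i}$. $\mathrm{Tr}_{q^n/q}(x)=x+x^q+\cdots+x^{q^{n-1}}$. A permutation polynomial of a finite field is a polynomial inducing a bijection of it. *)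

theory Defs
  imports "HOL-Computational_Algebra.Polynomial_Factorial" "HOL-Library.Cardinality"
begin

definition subfq :: "nat \<Rightarrow> 'a::field set" where
  "subfq q = {x. x ^ q = x}"

definition linq :: "nat \<Rightarrow> 'a::field poly \<Rightarrow> 'a poly" where
  "linq q u = (\<Sum>i\<le>degree u. monom (coeff u i) (q ^ i))"

definition trq :: "nat \<Rightarrow> nat \<Rightarrow> 'a::field \<Rightarrow> 'a" where
  "trq q n x = (\<Sum>j<n. x ^ (q ^ j))"

definition ga :: "nat \<Rightarrow> 'a::field \<Rightarrow> 'a poly" where
  "ga n a = (monom 1 n - 1) div [:-a, 1:]"

definition pcong :: "'a::field poly \<Rightarrow> 'a poly \<Rightarrow> 'a poly \<Rightarrow> bool" where
  "pcong A B m \<longleftrightarrow> m dvd (A - B)"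

definition Qbar :: "nat \<Rightarrow> nat \<Rightarrow> 'a::field \<Rightarrow> 'a \<Rightarrow> 'a poly \<Rightarrow> 'a poly \<Rightarrow> 'a poly \<Rightarrow> 'a \<Rightarrow> 'a" where
  "Qbar q n a \<delta> f h k x =
     (1 / a) * (\<Sum>i\<le>degree f. trq q n (\<delta> powi (int i - 1) * coeff f i) * x ^ i)
     + poly k (\<delta> * x) * poly h a * x"

end

theory Submission
  imports Defs
begin

text \<open>
  Write L for the linearized associate of g_a. Since (x - a) g_a = x^n - 1 and the linearized
  associate of x^n - 1 vanishes on F_(q^n), L(x)^q = a L(x), so L maps F_(q^n) onto the line
  \<delta> F_q; moreover L commutes with L_h up to the factor h(a). This gives the commutative square
  \<delta>^-1 L(P(x)) = Qbar_a(\<delta>^-1 L(x)). Thus P maps fibres of L to fibres of L as Qbar_a permutes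
  F_q, and inside a fibre P(x) - P(x') = k(L(x)) L_h(x - x') with k(L(x)) in F_q^*. So P is a
  bijection iff Qbar_a is one and ker L_h meets ker L trivially, which is gcd(h, g_a) = 1.
  For the inverse, h H = 1 + w g_a gives L_H(L_h(x)) = x + w(a) L(x); in P_0 the F-term cancels
  the contribution of f and the term w(a) L(x), leaving x. If p divides n then x - a divides w,
  so w(a) = 0 and no linear correction term is needed.
\<close>

section \<open>Linearized polynomials and the subfield F_q\<close>

lemma poly_linq_eq_sum:
  fixes u :: "'a::field poly"
  assumes "degree u \<le> N"
  shows "poly (linq q u) x = (\<Sum>i\<le>N. coeff u i * x ^ q ^ i)"
proof -
  have "poly (linq q u) x = (\<Sum>i\<le>degree u. coeff u i * x ^ q ^ i)"
    by (simp add: linq_def poly_sum poly_monom)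
  also have "\<dots> = (\<Sum>i\<le>N. coeff u i * x ^ q ^ i)"
    by (rule sum.mono_neutral_left) (use assms in \<open>auto simp: coeff_eq_0\<close>)
  finally show ?thesis .
qed

lemma poly_linq_pCons:
  fixes u :: "'a::field poly"
  shows "poly (linq q (pCons c u)) x = c * x + poly (linq q u) (x ^ q)"
proof -
  have "poly (linq q (pCons c u)) x = (\<Sum>i\<le>Suc (degree u). coeff (pCons c u) i * x ^ q ^ i)"
    by (rule poly_linq_eq_sum) (simp add: degree_pCons_le)
  also have "\<dots> = c * x + (\<Sum>i\<le>degree u. coeff u i * (x ^ q) ^ q ^ i)"
    by (subst sum.atMost_Suc_shift) (simp add: power_mult)
  also have "(\<Sum>i\<le>degree u. coeff u i * (x ^ q) ^ q ^ i) = poly (linq q u) (x ^ q)"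
    by (rule poly_linq_eq_sum[symmetric]) simp
  finally show ?thesis .
qed

lemma poly_linq_0 [simp]: "poly (linq q 0) x = (0::'a::field)"
  by (simp add: linq_def)

lemma poly_linq_1 [simp]: "poly (linq q 1) x = (x::'a::field)"
  by (simp add: linq_def poly_monom)

lemma poly_linq_add:
  fixes u v :: "'a::field poly"
  shows "poly (linq q (u + v)) x = poly (linq q u) x + poly (linq q v) x"
  using degree_add_le_max[of u v]
  by (simp add: poly_linq_eq_sum[of _ "max (degree u) (degree v)"] sum.distrib distrib_right)

lemma poly_linq_smult:
  fixes u :: "'a::field poly"
  shows "poly (linq q (smult c u)) x = c * poly (linq q u) x"
  by (simp add: poly_linq_eq_sum[of _ "degree u"] sum_distrib_left mult.assoc)

lemma poly_linq_diff:
  fixes u v :: "'a::field poly"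
  shows "poly (linq q (u - v)) x = poly (linq q u) x - poly (linq q v) x"
  using poly_linq_add[of q u "- v" x] poly_linq_smult[of q "-1" v x] by simp

lemma poly_linq_monom_1: "poly (linq q (monom 1 n)) x = (x::'a::field) ^ q ^ n"
proof -
  have "poly (linq q (monom 1 n)) x = (\<Sum>i\<le>n. (if n = i then 1 else 0) * x ^ q ^ i)"
    by (simp add: poly_linq_eq_sum[of _ n] degree_monom_le coeff_monom)
  also have "\<dots> = (\<Sum>i\<le>n. if n = i then x ^ q ^ i else 0)"
    by (rule sum.cong) simp_all
  finally show ?thesis
    by simp
qed

lemma card_roots_linq_le:
  fixes u :: "'a::field poly"
  assumes "q > 1" "u \<noteq> 0"
  shows "card {x. poly (linq q u) x = 0} \<le> q ^ degree u"
proof -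
  have "coeff (linq q u) (q ^ degree u) = lead_coeff u"
    using assms(1) by (simp add: linq_def coeff_sum coeff_monom power_inject_exp)
  then have "linq q u \<noteq> 0"
    using assms(2) by auto
  moreover have "degree (linq q u) \<le> q ^ degree u"
    unfolding linq_def
    by (rule degree_sum_le) (use assms(1) in \<open>auto intro: order.trans[OF degree_monom_le] power_increasing\<close>)
  ultimately show ?thesis
    using card_poly_roots_bound order.trans by blast
qed

lemma subfq_eq_roots_linq: "subfq q = {x::'a::field. poly (linq q [:-1, 1:]) x = 0}"
  by (auto simp: subfq_def poly_linq_pCons one_pCons[symmetric])

lemma card_subfq_le:
  assumes "q > 1"
  shows "card (subfq q :: 'a::field set) \<le> q"
  using card_roots_linq_le[OF assms, of "[:-1, 1::'a:]"] by (simp add: subfq_eq_roots_linq)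

lemma subfq_power:
  assumes "x \<in> subfq q"
  shows "x ^ j \<in> (subfq q :: 'a::field set)"
proof -
  have "(x ^ j) ^ q = (x ^ q) ^ j"
    by (simp flip: power_mult add: mult.commute)
  then show ?thesis
    using assms by (simp add: subfq_def)
qed

lemma power_q_minus_2_mult_eq_1:
  assumes "c \<in> subfq q" "c \<noteq> 0" "q \<ge> 2"
  shows "c ^ (q - 2) * c = (1::'a::field)"
proof -
  have "c ^ (q - 2) * c * c = c ^ q"
    using assms(3) by (simp add: power_Suc2[symmetric] numeral_2_eq_2 Suc_diff_Suc)
  then show ?thesis
    using assms(1,2) by (simp add: subfq_def)
qed

lemma pcong_imp_poly_eq_on_subfq:
  assumes "pcong F M (monom 1 q - [:0, 1:])" "s \<in> subfq q"
  shows "poly F s = poly M (s::'a::field)"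
proof -
  obtain r where "F - M = (monom 1 q - [:0, 1:]) * r"
    using assms(1) unfolding pcong_def by (elim dvdE)
  then have "poly (F - M) s = (s ^ q - s) * poly r s"
    by (simp add: poly_monom)
  then show ?thesis
    using assms(2) by (simp add: subfq_def)
qed

section \<open>Additive q-th powers\<close>

definition frob_poly :: "nat \<Rightarrow> 'a::field poly \<Rightarrow> 'a poly" where
  "frob_poly q u = map_poly (\<lambda>c. c ^ q) u"

context
  fixes q :: nat
  assumes q_pos: "q > 0"
    and power_q_add: "\<And>x y :: 'a::field. (x + y) ^ q = x ^ q + y ^ q"
begin

lemma power_q_uminus: "(- x :: 'a) ^ q = - (x ^ q)"
  using power_q_add[of x "- x"] q_pos by (simp add: eq_neg_iff_add_eq_0 add.commute power_0_left)

lemma power_q_diff: "(x - y :: 'a) ^ q = x ^ q - y ^ q"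
  using power_q_add[of x "- y"] power_q_uminus[of y] by simp

lemma power_q_sum: "(\<Sum>i\<in>A. g i) ^ q = (\<Sum>i\<in>A. g i ^ q :: 'a)"
  by (induction A rule: infinite_finite_induct) (simp_all add: power_q_add q_pos)

lemma subfq_diff: "x \<in> subfq q \<Longrightarrow> y \<in> subfq q \<Longrightarrow> x - y \<in> (subfq q :: 'a set)"
  by (simp add: subfq_def power_q_diff)

lemma poly_linq_add_arg: "poly (linq q u) (x + y) = poly (linq q u) x + poly (linq q u) (y :: 'a)"
  by (induction u arbitrary: x y rule: pCons_induct)
     (simp_all add: poly_linq_pCons power_q_add algebra_simps)

lemma poly_linq_zero_arg [simp]: "poly (linq q u) (0 :: 'a) = 0"
  by (induction u rule: pCons_induct) (simp_all add: poly_linq_pCons q_pos zero_power)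

lemma poly_linq_diff_arg: "poly (linq q u) (x - y) = poly (linq q u) x - poly (linq q u) (y :: 'a)"
  using poly_linq_add_arg[of u "x - y" y] by simp

lemma poly_linq_sum_arg: "poly (linq q u) (\<Sum>i\<in>A. g i) = (\<Sum>i\<in>A. poly (linq q u) (g i :: 'a))"
  by (induction A rule: infinite_finite_induct) (simp_all add: poly_linq_add_arg)

lemma poly_linq_scale_arg:
  assumes "c \<in> subfq q"
  shows "poly (linq q u) (c * x) = c * poly (linq q u) (x :: 'a)"
proof (induction u arbitrary: x rule: pCons_induct)
  case (pCons d u)
  have "c ^ q = c"
    using assms by (simp add: subfq_def)
  then show ?case
    by (simp add: poly_linq_pCons pCons.IH power_mult_distrib algebra_simps)
qed simp

lemma poly_linq_power_q:
  assumes "\<forall>i. coeff u i \<in> subfq q"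
  shows "poly (linq q u) x ^ q = poly (linq q u) (x ^ q :: 'a)"
  using assms
proof (induction u arbitrary: x rule: pCons_induct)
  case (pCons c u)
  have "c ^ q = c" "\<forall>i. coeff u i \<in> subfq q"
    using pCons.prems[rule_format, of 0] pCons.prems[rule_format, of "Suc i" for i]
    by (simp_all add: subfq_def)
  then show ?case
    using pCons.IH by (simp add: poly_linq_pCons power_q_add power_mult_distrib)
qed (simp add: q_pos)

lemma poly_linq_mult:
  assumes "\<forall>i. coeff v i \<in> subfq q"
  shows "poly (linq q (u * v)) x = poly (linq q u) (poly (linq q v) (x :: 'a))"
  by (induction u arbitrary: x rule: pCons_induct)
     (simp_all add: poly_linq_add poly_linq_smult poly_linq_pCons poly_linq_power_q[OF assms])

lemma poly_linq_eigenvector: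
  assumes "a \<in> subfq q" "y ^ q = a * y"
  shows "poly (linq q u) y = poly u a * (y :: 'a)"
  by (induction u rule: pCons_induct)
     (simp_all add: poly_linq_pCons assms(2) poly_linq_scale_arg[OF assms(1)] algebra_simps)

lemma coeff_frob_poly: "coeff (frob_poly q u) i = (coeff u i :: 'a) ^ q"
  using q_pos by (simp add: frob_poly_def coeff_map_poly)

lemma degree_frob_poly: "degree (frob_poly q u) = degree (u :: 'a poly)"
  unfolding frob_poly_def by (rule degree_map_poly) simp

lemma frob_poly_eq_self_iff: "frob_poly q u = u \<longleftrightarrow> (\<forall>i. coeff (u :: 'a poly) i \<in> subfq q)"
  by (auto simp: poly_eq_iff coeff_frob_poly subfq_def)

lemma frob_poly_1: "frob_poly q 1 = (1 :: 'a poly)"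
  using q_pos by (intro poly_eqI) (simp add: coeff_frob_poly coeff_1)

lemma frob_poly_diff: "frob_poly q (u - v) = frob_poly q u - frob_poly q (v :: 'a poly)"
  by (rule poly_eqI) (simp add: coeff_frob_poly power_q_diff)

lemma frob_poly_mult: "frob_poly q (u * v) = frob_poly q u * frob_poly q (v :: 'a poly)"
proof (rule poly_eqI)
  fix n
  have "coeff (frob_poly q (u * v)) n = (\<Sum>i\<le>n. coeff u i * coeff v (n - i)) ^ q"
    by (simp add: coeff_frob_poly coeff_mult)
  also have "\<dots> = (\<Sum>i\<le>n. coeff u i ^ q * coeff v (n - i) ^ q)"
    by (simp add: power_q_sum power_mult_distrib)
  finally show "coeff (frob_poly q (u * v)) n = coeff (frob_poly q u * frob_poly q v) n"
    by (simp add: coeff_mult coeff_frob_poly)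
qed

lemma frob_poly_dvd: "u dvd v \<Longrightarrow> frob_poly q u dvd frob_poly q (v :: 'a poly)"
  by (auto simp: frob_poly_mult)

lemma frob_poly_eq_self_if_dvd:
  assumes "frob_poly q d dvd d" "lead_coeff d = (1 :: 'a)"
  shows "frob_poly q d = d"
proof -
  obtain r where r: "frob_poly q d * r = d"
    using assms(1) by (metis dvdE)
  have "d \<noteq> 0"
    using assms(2) by auto
  then have "frob_poly q d \<noteq> 0" "r \<noteq> 0"
    using r by auto
  then have "degree (frob_poly q d) + degree r = degree d"
    using r degree_mult_eq by metis
  then have "degree r = 0"
    by (simp add: degree_frob_poly)
  moreover have "lead_coeff (frob_poly q d) = 1"
    using assms(2) q_pos by (simp add: coeff_frob_poly degree_frob_poly)
  then have "lead_coeff r = 1"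
    using r assms(2) by (metis lead_coeff_mult mult_1)
  ultimately have "r = 1"
    by (metis degree_0_id one_pCons)
  then show ?thesis
    using r by simp
qed

lemma frob_poly_eq_self_cancel:
  assumes "frob_poly q d = d" "frob_poly q (d * e) = d * e" "d \<noteq> (0 :: 'a poly)"
  shows "frob_poly q e = e"
  using assms frob_poly_mult[of d e] by simp

end

lemma inverse_mod_unique:
  fixes h m H1 H2 :: "'a::field_gcd poly"
  assumes "coprime h m" "pcong (h * H1) 1 m" "pcong (h * H2) 1 m"
    and "H1 = 0 \<or> degree H1 < degree m" "H2 = 0 \<or> degree H2 < degree m"
  shows "H1 = H2"
proof (rule ccontr)
  assume ne: "H1 \<noteq> H2"
  have "m dvd h * (H1 - H2)"
    using dvd_diff[OF assms(2,3)[unfolded pcong_def]] by (simp add: algebra_simps)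
  then have "m dvd H1 - H2"
    using assms(1) by (simp add: coprime_dvd_mult_right_iff coprime_commute)
  then have "degree m \<le> degree (H1 - H2)"
    using ne by (intro dvd_imp_degree_le) auto
  moreover have "degree (H1 - H2) < degree m"
    using assms(4,5) ne degree_diff_le_max[of H1 H2] by auto
  ultimately show False
    by simp
qed

lemma ex1_inverse_mod_subfq:
  fixes h m :: "'a::field_gcd poly"
  assumes q_pos: "q > 0" and power_q_add: "\<And>x y :: 'a. (x + y) ^ q = x ^ q + y ^ q"
    and "coprime h m" "m \<noteq> 0" "\<forall>i. coeff h i \<in> subfq q" "\<forall>i. coeff m i \<in> subfq q"
  shows "\<exists>!H. (\<forall>i. coeff H i \<in> subfq q) \<and> (H = 0 \<or> degree H < degree m) \<and> pcong (h * H) 1 m"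
proof -
  note frob = frob_poly_eq_self_iff[OF q_pos power_q_add]
  obtain s t where st: "s * h + t * m = 1"
    using bezout_coefficients_fst_snd[of h m] assms(3) by (metis coprime_imp_gcd_eq_1)
  define H where "H = s mod m"
  have "h * H - 1 = h * H - (s * h + t * m)"
    by (simp add: st)
  also have "\<dots> = m * (- (h * (s div m)) - t)"
    by (simp add: H_def minus_div_mult_eq_mod[symmetric] algebra_simps)
  finally have "h * H - 1 = m * (- (h * (s div m)) - t)" .
  then have H: "pcong (h * H) 1 m"
    by (simp add: pcong_def)
  have H_deg: "H = 0 \<or> degree H < degree m"
    unfolding H_def using degree_mod_less'[OF assms(4)] by blast
  have "frob_poly q m dvd frob_poly q (h * H - 1)"
    using H unfolding pcong_def by (rule frob_poly_dvd[OF q_pos power_q_add])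
  then have "pcong (h * frob_poly q H) 1 m"
    using assms(5,6) unfolding pcong_def frob[symmetric]
    by (simp add: frob_poly_diff[OF q_pos power_q_add] frob_poly_mult[OF q_pos power_q_add]
        frob_poly_1[OF q_pos power_q_add])
  moreover have "frob_poly q H = 0 \<or> degree (frob_poly q H) < degree m"
    using H_deg degree_frob_poly[OF q_pos power_q_add, of H] by (auto simp: frob_poly_def)
  ultimately have "frob_poly q H = H"
    using inverse_mod_unique[OF assms(3) _ H _ H_deg] by blast
  then show ?thesis
    using H H_deg inverse_mod_unique[OF assms(3)] unfolding frob by blast
qed

lemma frob_poly_monic_gcd:
  fixes u v :: "'a::field_gcd poly"
  assumes q_pos: "q > 0" and power_q_add: "\<And>x y :: 'a. (x + y) ^ q = x ^ q + y ^ q"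
    and "frob_poly q u = u" "frob_poly q v = v" "gcd u v \<noteq> 0"
  defines "D \<equiv> smult (inverse (lead_coeff (gcd u v))) (gcd u v)"
  shows "frob_poly q D = D"
proof (rule frob_poly_eq_self_if_dvd[OF q_pos power_q_add])
  have "D dvd u" "D dvd v"
    using assms(5) by (simp_all add: D_def smult_dvd_iff)
  then have "frob_poly q D dvd gcd u v"
    using frob_poly_dvd[OF q_pos power_q_add, of D] assms(3,4) by (metis gcd_greatest)
  then show "frob_poly q D dvd D"
    by (simp add: D_def dvd_smult)
  show "lead_coeff D = 1"
    using assms(5) by (simp add: D_def)
qed

section \<open>Finite fields\<close>

lemma power_card_eq_self: "(x :: 'a::{field,finite}) ^ CARD('a) = x"
proof (cases "x = 0")
  case False
  let ?U = "UNIV - {0} :: 'a set"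
  obtain N where N: "card ?U = N"
    by blast
  have "bij_betw ((*) x) ?U ?U"
    by (rule bij_betw_byWitness[where f' = "(*) (inverse x)"]) (use False in auto)
  then have "(\<Prod>y\<in>?U. x * y) = \<Prod>?U"
    using prod.reindex_bij_betw[of "(*) x" ?U ?U "\<lambda>y. y"] by simp
  then have "x ^ N * \<Prod>?U = 1 * \<Prod>?U"
    by (simp add: prod.distrib N)
  moreover have "\<Prod>?U \<noteq> 0"
    by simp
  ultimately have "x ^ N = 1"
    by simp
  moreover have "CARD('a) = Suc N"
    using N card_Suc_Diff1[of "UNIV :: 'a set" 0] by simp
  ultimately show ?thesis
    by simp
qed simp

lemma of_nat_card_eq_0: "of_nat CARD('a) = (0 :: 'a::{ring_1,finite})"
proof -
  have "(\<Sum>x\<in>UNIV. x + 1) = (\<Sum>x\<in>UNIV. x :: 'a)"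
    by (rule sum.reindex_bij_witness[of _ "\<lambda>y. y - 1" "\<lambda>y. y + 1"]) auto
  then show ?thesis
    by (simp add: sum.distrib)
qed

lemma CHAR_eq_prime_of_card:
  assumes "prime p" "CARD('a::{field,finite}) = p ^ m" "m > 0"
  shows "CHAR('a) = p"
proof -
  have "prime CHAR('a)"
    using prime_CHAR_semidom finite_imp_CHAR_pos[where ?'a = 'a] by simp
  moreover have "of_nat (p ^ m) = (0 :: 'a)"
    using of_nat_card_eq_0[where ?'a = 'a] assms(2) by simp
  then have "CHAR('a) dvd p ^ m"
    by (simp only: of_nat_eq_0_iff_char_dvd)
  ultimately show ?thesis
    using assms(1) prime_dvd_power primes_dvd_imp_eq by blast
qed

lemma card_le_card_range_mult_card_kernel:
  fixes L :: "'a::{ab_group_add,finite} \<Rightarrow> 'b::ab_group_add"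
  assumes L_diff: "\<And>x y. L (x - y) = L x - L y"
  shows "CARD('a) \<le> card (range L) * card {x. L x = 0}"
proof -
  define s where "s = inv L"
  have "inj (\<lambda>x. (L x, x - s (L x)))"
    by (rule injI) (metis prod.inject diff_left_imp_eq diff_add_cancel)
  moreover have "L (x - s (L x)) = 0" for x
    using L_diff f_inv_into_f[of "L x" L UNIV] unfolding s_def by simp
  then have "range (\<lambda>x. (L x, x - s (L x))) \<subseteq> range L \<times> {x. L x = 0}"
    by auto
  ultimately have "CARD('a) \<le> card (range L \<times> {x. L x = 0})"
    by (intro card_inj_on_le) auto
  then show ?thesis
    by (simp add: card_cartesian_product)
qed

section \<open>Geometric polynomials\<close>

fun geom_poly :: "'a::comm_ring_1 \<Rightarrow> nat \<Rightarrow> 'a poly" where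
  "geom_poly a 0 = 0"
| "geom_poly a (Suc n) = monom 1 n + smult a (geom_poly a n)"

lemma mult_geom_poly: "[:-a, 1:] * geom_poly a n = monom 1 n - [:a ^ n:]"
proof (induction n)
  case (Suc n)
  have x_monom: "[:-a, 1:] * monom 1 n = monom 1 (Suc n) - smult a (monom 1 n)"
    by (simp add: monom_Suc mult_pCons_left mult_monom)
  have "[:-a, 1:] * geom_poly a (Suc n) = [:-a, 1:] * monom 1 n + smult a ([:-a, 1:] * geom_poly a n)"
    by (simp only: geom_poly.simps distrib_left mult_smult_right)
  also have "\<dots> = monom 1 (Suc n) - smult a (monom 1 n) + smult a (monom 1 n - [:a ^ n:])"
    by (simp only: Suc.IH x_monom)
  also have "\<dots> = monom 1 (Suc n) - [:a ^ Suc n:]"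
    by (simp add: smult_diff_right)
  finally show ?case .
qed (simp add: monom_0)

lemma coeff_geom_poly: "coeff (geom_poly a n) i = (if i < n then a ^ (n - 1 - i) else 0)"
proof (induction n)
  case (Suc n)
  then show ?case
    by (cases "i < n") (auto simp: coeff_monom power_Suc[symmetric] Suc_diff_Suc)
qed simp

lemma poly_geom_poly_self: "poly (geom_poly a n) a = of_nat n * a ^ (n - 1)"
proof (induction n)
  case (Suc n)
  then show ?case
    by (cases n) (simp_all add: poly_monom algebra_simps)
qed simp

lemma degree_geom_poly: "n > 0 \<Longrightarrow> degree (geom_poly a n) = n - 1"
  by (intro antisym degree_le le_degree) (auto simp: coeff_geom_poly)

lemma ga_eq_geom_poly:
  assumes "a ^ n = (1::'a::field)"
  shows "ga n a = geom_poly a n"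
proof -
  have "monom 1 n - 1 = [:-a, 1:] * geom_poly a n"
    using assms by (simp add: mult_geom_poly one_pCons del: mult_pCons_left)
  then show ?thesis
    unfolding ga_def by (metis nonzero_mult_div_cancel_left pCons_eq_0_iff zero_neq_one)
qed

section \<open>The linearized associate of g_a\<close>

locale linearized_frame =
  fixes q n :: nat and a \<delta> :: "'a::{field_gcd,finite}"
  assumes q_gt_1: "q > 1"
    and power_q_add: "\<And>x y :: 'a. (x + y) ^ q = x ^ q + y ^ q"
    and card_eq: "CARD('a) = q ^ n"
    and n_pos: "n > 0"
    and a_in_subfq: "a \<in> subfq q"
    and a_power_n: "a ^ n = 1"
    and \<delta>_nonzero: "\<delta> \<noteq> 0"
    and \<delta>_power_q: "\<delta> ^ q = a * \<delta>"
begin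

abbreviation Lg :: "'a \<Rightarrow> 'a" where
  "Lg \<equiv> poly (linq q (ga n a))"

lemma q_pos: "q > 0"
  using q_gt_1 by simp

lemmas linq_add_arg = poly_linq_add_arg[OF q_pos power_q_add]
  and linq_zero_arg [simp] = poly_linq_zero_arg[OF q_pos power_q_add]
  and linq_diff_arg = poly_linq_diff_arg[OF q_pos power_q_add]
  and linq_sum_arg = poly_linq_sum_arg[OF q_pos power_q_add]
  and linq_scale_arg = poly_linq_scale_arg[OF q_pos power_q_add]
  and linq_mult = poly_linq_mult[OF q_pos power_q_add]
  and linq_eigenvector = poly_linq_eigenvector[OF q_pos power_q_add]

lemma power_q_power_n [simp]: "x ^ q ^ n = (x :: 'a)"
  using power_card_eq_self[of x] card_eq by simp

lemma a_nonzero: "a \<noteq> 0"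
  using a_power_n n_pos by (auto simp: zero_power)

lemma a_power_n_minus_1: "a ^ (n - 1) = inverse a"
  using a_power_n n_pos a_nonzero by (cases n) (simp_all add: field_simps)

lemma power_a_in_subfq: "a ^ j \<in> subfq q"
  using a_in_subfq by (rule subfq_power)

lemma coeff_ga: "coeff (ga n a) i = (if i < n then a ^ (n - 1 - i) else 0)"
  by (simp add: ga_eq_geom_poly[OF a_power_n] coeff_geom_poly)

lemma ga_coeffs_in_subfq: "\<forall>i. coeff (ga n a) i \<in> subfq q"
  using q_pos power_a_in_subfq by (simp add: coeff_ga subfq_def zero_power)

lemma degree_ga: "degree (ga n a) = n - 1"
  using n_pos by (simp add: ga_eq_geom_poly[OF a_power_n] degree_geom_poly)

lemma ga_nonzero: "ga n a \<noteq> 0"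
  using n_pos coeff_ga[of "n - 1"] by auto

lemma xn_minus_1_eq: "monom 1 n - 1 = [:-a, 1:] * ga n a"
  using mult_geom_poly[of a n] a_power_n
  by (simp add: ga_eq_geom_poly[OF a_power_n] one_pCons del: mult_pCons_left)

lemma ga_dvd_xn_minus_1: "ga n a dvd monom 1 n - 1"
  by (simp add: xn_minus_1_eq del: mult_pCons_left)

lemma poly_ga_self: "poly (ga n a) a = of_nat n * inverse a"
  by (simp only: ga_eq_geom_poly[OF a_power_n] poly_geom_poly_self a_power_n_minus_1)

lemma xn_minus_1_nonzero: "(monom 1 n - 1 :: 'a poly) \<noteq> 0"
  using ga_nonzero by (simp add: xn_minus_1_eq del: mult_pCons_left)

lemma degree_xn_minus_1: "degree (monom 1 n - 1 :: 'a poly) = n"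
  using ga_nonzero n_pos by (simp add: xn_minus_1_eq degree_mult_eq degree_ga del: mult_pCons_left)

lemma xn_minus_1_coeffs_in_subfq: "\<forall>i. coeff (monom 1 n - 1 :: 'a poly) i \<in> subfq q"
proof
  fix i
  have "coeff (monom 1 n) i \<in> subfq q" "coeff (1 :: 'a poly) i \<in> subfq q"
    using q_pos by (simp_all add: coeff_monom coeff_1 subfq_def zero_power)
  then show "coeff (monom 1 n - 1 :: 'a poly) i \<in> subfq q"
    unfolding coeff_diff by (rule subfq_diff[OF q_pos power_q_add])
qed

lemma poly_linq_mult_xn_minus_1 [simp]: "poly (linq q (u * (monom 1 n - 1))) x = (0 :: 'a)"
proof -
  have "poly (linq q (u * (monom 1 n - 1))) x = poly (linq q u) (poly (linq q (monom 1 n - 1)) x)"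
    by (rule linq_mult[OF xn_minus_1_coeffs_in_subfq])
  then show ?thesis
    by (simp add: poly_linq_diff poly_linq_monom_1)
qed

lemma Lg_power_q: "Lg x ^ q = a * Lg x"
proof -
  have "Lg x ^ q = poly (linq q (pCons 0 (ga n a))) x"
    by (simp add: poly_linq_power_q[OF q_pos power_q_add ga_coeffs_in_subfq] poly_linq_pCons)
  also have "pCons 0 (ga n a) = 1 * (monom 1 n - 1) + smult a (ga n a)"
    by (simp add: xn_minus_1_eq)
  finally show ?thesis
    by (simp only: poly_linq_add poly_linq_smult poly_linq_mult_xn_minus_1) simp
qed

lemma Lg_div_\<delta>_in_subfq: "inverse \<delta> * Lg x \<in> subfq q"
  using Lg_power_q[of x] a_nonzero
  by (simp add: subfq_def power_mult_distrib power_inverse \<delta>_power_q)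

lemma \<delta>_power_q_power: "\<delta> ^ q ^ i = a ^ i * \<delta>"
proof (induction i)
  case (Suc i)
  have "\<delta> ^ q ^ Suc i = (\<delta> ^ q ^ i) ^ q"
    by (simp only: power_Suc2 power_mult)
  also have "\<dots> = a ^ Suc i * \<delta>"
    using power_a_in_subfq[of i] by (simp add: Suc.IH power_mult_distrib \<delta>_power_q subfq_def)
  finally show ?case .
qed simp

lemma Lg_\<delta>_mult: "Lg (\<delta> * t) = \<delta> * (trq q n t / a)"
proof -
  have "Lg (\<delta> * t) = (\<Sum>i<n. a ^ (n - 1 - i) * (\<delta> * t) ^ q ^ i)"
    using n_pos by (simp add: poly_linq_eq_sum[of _ "n - 1"] degree_ga coeff_ga atLeast0AtMost
        atMost_atLeast0 lessThan_atLeast0 flip: atLeastLessThanSuc_atLeastAtMost)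
  also have "\<dots> = (\<Sum>i<n. a ^ (n - 1) * \<delta> * t ^ q ^ i)"
  proof (rule sum.cong)
    fix i assume "i \<in> {..<n}"
    then have "a ^ (n - 1 - i) * a ^ i = a ^ (n - 1)"
      by (simp flip: power_add)
    then show "a ^ (n - 1 - i) * (\<delta> * t) ^ q ^ i = a ^ (n - 1) * \<delta> * t ^ q ^ i"
      by (simp add: power_mult_distrib \<delta>_power_q_power mult_ac)
  qed simp
  also have "\<dots> = \<delta> * (a ^ (n - 1) * trq q n t)"
    by (simp add: trq_def sum_distrib_left mult_ac)
  finally show ?thesis
    by (simp only: a_power_n_minus_1) (simp add: field_simps)
qed

lemma range_Lg: "range Lg = (\<lambda>t. \<delta> * t) ` subfq q"
proof (rule card_seteq)
  show "range Lg \<subseteq> (\<lambda>t. \<delta> * t) ` subfq q"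
  proof
    fix y assume "y \<in> range Lg"
    then obtain x where "y = Lg x"
      by blast
    then have "y = \<delta> * (inverse \<delta> * Lg x)"
      using \<delta>_nonzero by simp
    then show "y \<in> (\<lambda>t. \<delta> * t) ` subfq q"
      using Lg_div_\<delta>_in_subfq by blast
  qed
  have "card {x. Lg x = 0} \<le> q ^ (n - 1)"
    using card_roots_linq_le[OF q_gt_1 ga_nonzero] by (simp add: degree_ga)
  then have "q * q ^ (n - 1) \<le> card (range Lg) * q ^ (n - 1)"
    using card_le_card_range_mult_card_kernel[of Lg] linq_diff_arg card_eq n_pos
    by (metis (no_types, lifting) mult_le_mono2 order.trans power_eq_if neq0_conv)
  then have "q \<le> card (range Lg)"
    using q_gt_1 by simp
  moreover have "card ((\<lambda>t. \<delta> * t) ` subfq q) \<le> q"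
    using card_image_le[of "subfq q" "\<lambda>t. \<delta> * t"] card_subfq_le[OF q_gt_1, where ?'a = 'a] by simp
  ultimately show "card ((\<lambda>t. \<delta> * t) ` subfq q) \<le> card (range Lg)"
    by simp
qed simp

lemma linq_not_identically_zero:
  assumes "e \<noteq> 0" "degree e < n"
  obtains w where "poly (linq q e) w \<noteq> (0 :: 'a)"
proof -
  have "card {x. poly (linq q e) x = (0 :: 'a)} < CARD('a)"
    using card_roots_linq_le[OF q_gt_1 assms(1)] power_strict_increasing[OF assms(2) q_gt_1] card_eq
    by simp
  then show ?thesis
    using that by (metis (mono_tags) UNIV_eq_I mem_Collect_eq less_irrefl)
qed

lemma common_kernel_of_common_divisor:
  fixes u v D :: "'a poly"
  assumes "D dvd u" "D dvd v" "D dvd monom 1 n - 1"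
    and "frob_poly q D = D" "degree D > 0"
  obtains z where "z \<noteq> 0" "poly (linq q u) z = 0" "poly (linq q v) z = 0"
proof -
  obtain e where e: "monom 1 n - 1 = D * e"
    using assms(3) by (elim dvdE)
  have "D * e \<noteq> 0"
    using xn_minus_1_nonzero e by simp
  then have "D \<noteq> 0" "e \<noteq> 0"
    by auto
  have e_coeffs: "\<forall>i. coeff e i \<in> subfq q"
    using frob_poly_eq_self_cancel[OF q_pos power_q_add assms(4) _ \<open>D \<noteq> 0\<close>]
      xn_minus_1_coeffs_in_subfq e by (simp add: frob_poly_eq_self_iff[OF q_pos power_q_add])
  have "n = degree D + degree e"
    using degree_xn_minus_1 degree_mult_eq[OF \<open>D \<noteq> 0\<close> \<open>e \<noteq> 0\<close>] e by simp
  then obtain w where w: "poly (linq q e) w \<noteq> 0"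
    using linq_not_identically_zero[OF \<open>e \<noteq> 0\<close>] assms(5) by auto
  have "poly (linq q u') (poly (linq q e) w) = 0" if D_dvd: "D dvd u'" for u'
  proof -
    obtain u'' where "u' = D * u''"
      using D_dvd by (elim dvdE)
    then have "u' * e = u'' * (monom 1 n - 1)"
      by (simp add: e mult_ac)
    then show ?thesis
      by (metis linq_mult[OF e_coeffs] poly_linq_mult_xn_minus_1)
  qed
  then show ?thesis
    using that[OF w] assms(1,2) by blast
qed

lemma gcd_eq_1_iff_common_kernel_trivial:
  fixes u v :: "'a poly"
  assumes u: "\<forall>i. coeff u i \<in> subfq q" and v: "\<forall>i. coeff v i \<in> subfq q"
    and v_dvd: "v dvd monom 1 n - 1"
  shows "gcd u v = 1 \<longleftrightarrow> (\<forall>z. poly (linq q u) z = 0 \<longrightarrow> poly (linq q v) z = 0 \<longrightarrow> z = 0)"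
proof
  assume "gcd u v = 1"
  then obtain s t where st: "s * u + t * v = 1"
    using bezout_coefficients_fst_snd[of u v] by metis
  show "\<forall>z. poly (linq q u) z = 0 \<longrightarrow> poly (linq q v) z = 0 \<longrightarrow> z = 0"
  proof (intro allI impI)
    fix z assume "poly (linq q u) z = 0" "poly (linq q v) z = 0"
    then have "poly (linq q (s * u + t * v)) z = 0"
      by (simp add: poly_linq_add linq_mult[OF u] linq_mult[OF v])
    then show "z = 0"
      by (simp add: st)
  qed
next
  assume kernel: "\<forall>z. poly (linq q u) z = 0 \<longrightarrow> poly (linq q v) z = 0 \<longrightarrow> z = 0"
  show "gcd u v = 1"
  proof (rule ccontr)
    assume ne: "gcd u v \<noteq> 1"
    have "v \<noteq> 0"
      using v_dvd xn_minus_1_nonzero by auto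
    then have "lead_coeff (gcd u v) \<noteq> 0"
      by simp
    define D where "D = smult (inverse (lead_coeff (gcd u v))) (gcd u v)"
    have "gcd u v \<noteq> 0"
      using \<open>v \<noteq> 0\<close> by simp
    have "D dvd u" "D dvd v"
      using \<open>gcd u v \<noteq> 0\<close> by (simp_all add: D_def smult_dvd_iff)
    have "degree D > 0"
    proof (rule ccontr)
      assume "\<not> degree D > 0"
      then have "is_unit (gcd u v)"
        using is_unit_iff_degree[OF \<open>gcd u v \<noteq> 0\<close>] \<open>v \<noteq> 0\<close> by (simp add: D_def)
      with ne show False
        by (metis is_unit_gcd coprime_iff_gcd_eq_1)
    qed
    moreover have "frob_poly q D = D"
      using frob_poly_monic_gcd[OF q_pos power_q_add _ _ \<open>gcd u v \<noteq> 0\<close>] u v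
      by (simp add: D_def frob_poly_eq_self_iff[OF q_pos power_q_add])
    moreover have "D dvd monom 1 n - 1"
      using \<open>D dvd v\<close> v_dvd by (rule dvd_trans)
    ultimately obtain z where "z \<noteq> 0" "poly (linq q u) z = 0" "poly (linq q v) z = 0"
      using common_kernel_of_common_divisor[OF \<open>D dvd u\<close> \<open>D dvd v\<close>] by blast
    with kernel show False
      by blast
  qed
qed

lemma coprime_xn_minus_1_if_char_dvd:
  assumes "of_nat n = (0 :: 'a)" "coprime u (ga n a)"
  shows "coprime u (monom 1 n - 1)"
proof -
  have "poly (ga n a) a = 0"
    using assms(1) by (simp add: poly_ga_self)
  then have "[:-a, 1:] dvd ga n a"
    by (simp add: poly_eq_0_iff_dvd)
  then have "monom 1 n - 1 dvd ga n a * ga n a"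
    by (simp add: xn_minus_1_eq del: mult_pCons_left)
  moreover have "coprime u (ga n a * ga n a)"
    using assms(2) by simp
  ultimately show ?thesis
    by (rule coprime_divisors[OF dvd_refl])
qed

end

section \<open>The permutation polynomial and its inverse\<close>

locale perm_setting = linearized_frame +
  fixes f h k :: "'a poly"
  assumes h_coeffs_in_subfq: "\<forall>i. coeff h i \<in> subfq q"
    and k_on_line: "\<forall>x\<in>subfq q. poly k (\<delta> * x) \<in> subfq q - {0}"
begin

abbreviation Lh :: "'a \<Rightarrow> 'a" where
  "Lh \<equiv> poly (linq q h)"

abbreviation P_map :: "'a \<Rightarrow> 'a" where
  "P_map \<equiv> \<lambda>x. poly f (Lg x) + poly k (Lg x) * Lh x"

abbreviation Q_map :: "'a \<Rightarrow> 'a" where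
  "Q_map \<equiv> Qbar q n a \<delta> f h k"

abbreviation P0_map :: "'a poly \<Rightarrow> 'a poly \<Rightarrow> 'a poly \<Rightarrow> 'a \<Rightarrow> 'a" where
  "P0_map R F H \<equiv> \<lambda>x. poly F (inverse \<delta> * Lg x)
     + (poly k (\<delta> * poly R (inverse \<delta> * Lg x))) ^ (q - 2) * poly (linq q H) x"

lemma poly_k_Lg: "poly k (Lg x) \<in> subfq q" "poly k (Lg x) \<noteq> 0"
proof -
  have "poly k (Lg x) = poly k (\<delta> * (inverse \<delta> * Lg x))"
    using \<delta>_nonzero by (simp add: field_simps)
  then show "poly k (Lg x) \<in> subfq q" "poly k (Lg x) \<noteq> 0"
    using k_on_line Lg_div_\<delta>_in_subfq[of x] by auto
qed

lemma Lg_Lh: "Lg (Lh x) = poly h a * Lg x"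
proof -
  have "Lg (Lh x) = poly (linq q (ga n a * h)) x"
    by (rule linq_mult[OF h_coeffs_in_subfq, symmetric])
  also have "\<dots> = poly (linq q (h * ga n a)) x"
    by (simp only: mult.commute)
  also have "\<dots> = Lh (Lg x)"
    by (rule linq_mult[OF ga_coeffs_in_subfq])
  also have "\<dots> = poly h a * Lg x"
    by (rule linq_eigenvector[OF a_in_subfq Lg_power_q])
  finally show ?thesis .
qed

lemma Lg_poly_on_line:
  assumes "t \<in> subfq q"
  shows "Lg (poly u (\<delta> * t))
    = \<delta> * ((1 / a) * (\<Sum>i\<le>degree u. trq q n (\<delta> powi (int i - 1) * coeff u i) * t ^ i))"
proof -
  have "poly u (\<delta> * t) = (\<Sum>i\<le>degree u. t ^ i * (\<delta> * (\<delta> powi (int i - 1) * coeff u i)))"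
    unfolding poly_altdef
  proof (rule sum.cong)
    fix i
    have "\<delta> * \<delta> powi (int i - 1) = \<delta> ^ i"
      using \<delta>_nonzero by (cases i) (simp_all add: power_int_def)
    then show "coeff u i * (\<delta> * t) ^ i = t ^ i * (\<delta> * (\<delta> powi (int i - 1) * coeff u i))"
      by (simp add: power_mult_distrib mult_ac)
  qed simp
  moreover have "t ^ i \<in> subfq q" for i
    using assms by (rule subfq_power)
  ultimately have "Lg (poly u (\<delta> * t))
      = (\<Sum>i\<le>degree u. t ^ i * Lg (\<delta> * (\<delta> powi (int i - 1) * coeff u i)))"
    by (simp add: linq_sum_arg linq_scale_arg)
  then show ?thesis
    by (simp add: Lg_\<delta>_mult sum_distrib_left mult_ac)
qed

lemma Lg_P_map: "inverse \<delta> * Lg (P_map x) = Q_map (inverse \<delta> * Lg x)"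
proof -
  define t where "t = inverse \<delta> * Lg x"
  define S where "S = (\<Sum>i\<le>degree f. trq q n (\<delta> powi (int i - 1) * coeff f i) * t ^ i)"
  have t: "t \<in> subfq q"
    unfolding t_def by (rule Lg_div_\<delta>_in_subfq)
  have y: "Lg x = \<delta> * t"
    using \<delta>_nonzero by (simp add: t_def field_simps)
  have "Lg (P_map x) = \<delta> * ((1 / a) * S) + poly k (\<delta> * t) * (poly h a * (\<delta> * t))"
    using poly_k_Lg(1)[of x] by (simp add: y linq_add_arg linq_scale_arg Lg_Lh Lg_poly_on_line[OF t] S_def)
  then have "inverse \<delta> * Lg (P_map x) = (1 / a) * S + poly k (\<delta> * t) * poly h a * t"
    using \<delta>_nonzero by (simp add: field_simps)
  then show ?thesis
    unfolding t_def[symmetric] by (simp only: Qbar_def S_def)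
qed

lemma gcd_h_ga_eq_1_iff:
  "gcd h (ga n a) = 1 \<longleftrightarrow> (\<forall>z. Lh z = 0 \<longrightarrow> Lg z = 0 \<longrightarrow> z = 0)"
  using gcd_eq_1_iff_common_kernel_trivial[OF h_coeffs_in_subfq ga_coeffs_in_subfq ga_dvd_xn_minus_1] .

lemma P_map_diff_on_fibre:
  assumes "Lg x = Lg x'"
  shows "P_map x - P_map x' = poly k (Lg x) * Lh (x - x')"
  using assms by (simp add: linq_diff_arg right_diff_distrib)

lemma inj_P_map:
  assumes "gcd h (ga n a) = 1" and Q: "bij_betw Q_map (subfq q) (subfq q)"
  shows "inj P_map"
proof (rule injI)
  fix x x' assume eq: "P_map x = P_map x'"
  then have "Q_map (inverse \<delta> * Lg x) = Q_map (inverse \<delta> * Lg x')"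
    by (simp flip: Lg_P_map)
  then have "inverse \<delta> * Lg x = inverse \<delta> * Lg x'"
    using Q Lg_div_\<delta>_in_subfq unfolding bij_betw_def inj_on_def by blast
  then have L: "Lg x = Lg x'"
    using \<delta>_nonzero by simp
  then have "Lh (x - x') = 0"
    using P_map_diff_on_fibre[OF L] eq poly_k_Lg(2)[of x] by simp
  moreover have "Lg (x - x') = 0"
    using L by (simp add: linq_diff_arg)
  ultimately have "x - x' = 0"
    using assms(1) unfolding gcd_h_ga_eq_1_iff by blast
  then show "x = x'"
    by simp
qed

lemma bij_P_map_imp_gcd_eq_1:
  assumes "bij P_map"
  shows "gcd h (ga n a) = 1"
  unfolding gcd_h_ga_eq_1_iff
proof (intro allI impI)
  fix z assume "Lh z = 0" "Lg z = 0"
  then have "P_map z = P_map 0"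
    by simp
  then show "z = 0"
    using assms unfolding bij_def inj_def by blast
qed

lemma bij_P_map_imp_bij_Q_map:
  assumes "bij P_map"
  shows "bij_betw Q_map (subfq q) (subfq q)"
proof -
  let ?\<phi> = "\<lambda>x. inverse \<delta> * Lg x"
  have "inverse \<delta> * (\<delta> * t) = t" for t
    using \<delta>_nonzero by (simp add: field_simps)
  then have range_\<phi>: "range ?\<phi> = subfq q"
    using range_Lg by (metis (no_types, lifting) image_cong image_ident image_image)
  have "Q_map ` subfq q = range (\<lambda>x. ?\<phi> (P_map x))"
    unfolding range_\<phi>[symmetric] Lg_P_map by (simp add: image_image)
  also have "\<dots> = ?\<phi> ` range P_map"
    by (simp add: image_image)
  also have "\<dots> = subfq q"
    using assms range_\<phi> by (simp add: bij_def)
  finally have "Q_map ` subfq q = subfq q" .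
  then show ?thesis
    by (simp add: bij_betw_def eq_card_imp_inj_on)
qed

lemma bij_P_map_iff:
  "bij P_map \<longleftrightarrow> gcd h (ga n a) = 1 \<and> bij_betw Q_map (subfq q) (subfq q)"
proof
  assume "gcd h (ga n a) = 1 \<and> bij_betw Q_map (subfq q) (subfq q)"
  then have "inj P_map"
    using inj_P_map by simp
  then show "bij P_map"
    using finite_UNIV_inj_surj[of P_map] by (simp add: bij_def)
qed (use bij_P_map_imp_gcd_eq_1 bij_P_map_imp_bij_Q_map in blast)

lemma linq_H_Lh:
  assumes "h * H - 1 = ga n a * w"
  shows "poly (linq q H) (Lh x) = x + poly w a * Lg x"
proof -
  have "poly (linq q H) (Lh x) = poly (linq q (H * h)) x"
    by (rule linq_mult[OF h_coeffs_in_subfq, symmetric])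
  also have "H * h = 1 + w * ga n a"
    using assms by (metis diff_add_cancel add.commute mult.commute)
  also have "poly (linq q (1 + w * ga n a)) x = x + poly w a * Lg x"
    by (simp add: poly_linq_add linq_mult[OF ga_coeffs_in_subfq]
        linq_eigenvector[OF a_in_subfq Lg_power_q])
  finally show ?thesis .
qed

lemma P0_map_left_inverse:
  assumes R: "\<And>t. t \<in> subfq q \<Longrightarrow> poly R (Q_map t) = t"
    and H: "h * H - 1 = ga n a * w"
    and F: "\<And>s. s \<in> subfq q \<Longrightarrow> poly F s = - (poly k (\<delta> * poly R s) ^ (q - 2)
                 * poly (linq q H) (poly f (\<delta> * poly R s))) - poly w a * (\<delta> * poly R s)"
  shows "P0_map R F H (P_map x) = x"
proof -
  define t where "t = inverse \<delta> * Lg x"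
  define \<kappa> where "\<kappa> = poly k (Lg x)"
  have t: "t \<in> subfq q"
    unfolding t_def by (rule Lg_div_\<delta>_in_subfq)
  have y: "\<delta> * t = Lg x"
    using \<delta>_nonzero by (simp add: t_def field_simps)
  have Rs: "poly R (inverse \<delta> * Lg (P_map x)) = t"
    using R[OF t] by (simp add: Lg_P_map t_def)
  have \<kappa>_inv: "\<kappa> ^ (q - 2) * \<kappa> = 1"
    using poly_k_Lg[of x] q_gt_1 unfolding \<kappa>_def by (intro power_q_minus_2_mult_eq_1) auto
  have k_R: "poly k (\<delta> * poly R (inverse \<delta> * Lg (P_map x))) = \<kappa>"
    by (simp add: Rs y \<kappa>_def)
  have L_H: "poly (linq q H) (P_map x) = poly (linq q H) (poly f (Lg x)) + \<kappa> * (x + poly w a * Lg x)"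
    using poly_k_Lg(1)[of x] by (simp add: linq_add_arg linq_scale_arg linq_H_Lh[OF H] \<kappa>_def)
  have F_R: "poly F (inverse \<delta> * Lg (P_map x))
      = - (\<kappa> ^ (q - 2) * poly (linq q H) (poly f (Lg x))) - poly w a * Lg x"
    using F[OF Lg_div_\<delta>_in_subfq] by (simp add: Rs y \<kappa>_def)
  have "P0_map R F H (P_map x) = (\<kappa> ^ (q - 2) * \<kappa>) * (x + poly w a * Lg x) - poly w a * Lg x"
    by (simp only: k_R L_H F_R) (simp add: algebra_simps)
  then show ?thesis
    using \<kappa>_inv by simp
qed

lemma P0_map_inverse:
  assumes "bij P_map"
    and R: "\<forall>y\<in>subfq q. poly R y \<in> subfq q \<and> Q_map (poly R y) = y \<and> poly R (Q_map y) = y"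
    and H: "h * H - 1 = ga n a * w"
    and F: "\<And>s. s \<in> subfq q \<Longrightarrow> poly F s = - (poly k (\<delta> * poly R s) ^ (q - 2)
                 * poly (linq q H) (poly f (\<delta> * poly R s))) - poly w a * (\<delta> * poly R s)"
  shows "(\<forall>x. P0_map R F H (P_map x) = x) \<and> (\<forall>x. P_map (P0_map R F H x) = x)"
proof -
  have left: "P0_map R F H (P_map x) = x" for x
    using R by (intro P0_map_left_inverse[OF _ H F]) auto
  moreover have "P_map (P0_map R F H y) = y" for y
  proof -
    obtain x where "y = P_map x"
      using assms(1) by (auto simp: bij_def surj_def)
    then show ?thesis
      using left by simp
  qed
  ultimately show ?thesis
    by blast
qed

lemma inverse_if_char_dvd:
  assumes "of_nat n = (0 :: 'a)" "bij P_map"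
    and R: "\<forall>y\<in>subfq q. poly R y \<in> subfq q \<and> Q_map (poly R y) = y \<and> poly R (Q_map y) = y"
  shows "\<exists>!H. (\<forall>i. coeff H i \<in> subfq q) \<and> degree H + 1 \<le> n \<and> pcong (h * H) 1 (monom 1 n - 1)" (is ?ex1)
    and "\<forall>H F. (\<forall>i. coeff H i \<in> subfq q) \<and> degree H + 1 \<le> n \<and> pcong (h * H) 1 (monom 1 n - 1)
           \<and> pcong F (- (pcompose k (smult \<delta> R) ^ (q - 2)
                        * pcompose (linq q H) (pcompose f (smult \<delta> R))))
                   (monom 1 q - [:0, 1:])
           \<longrightarrow> (\<forall>x. P0_map R F H (P_map x) = x) \<and> (\<forall>x. P_map (P0_map R F H x) = x)" (is ?inverse)
proof -
  have "coprime h (ga n a)"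
    using assms(2) bij_P_map_iff by (simp add: coprime_iff_gcd_eq_1)
  then have "coprime h (monom 1 n - 1)"
    by (rule coprime_xn_minus_1_if_char_dvd[OF assms(1)])
  moreover have "(H = 0 \<or> degree H < degree (monom 1 n - 1 :: 'a poly)) \<longleftrightarrow> degree H + 1 \<le> n"
    for H :: "'a poly"
    using n_pos by (auto simp: degree_xn_minus_1)
  ultimately show ?ex1
    using ex1_inverse_mod_subfq[OF q_pos power_q_add _ xn_minus_1_nonzero h_coeffs_in_subfq
        xn_minus_1_coeffs_in_subfq] by simp
next
  show ?inverse
  proof (intro allI impI, elim conjE)
    fix H F :: "'a poly"
    assume H: "pcong (h * H) 1 (monom 1 n - 1)"
      and F: "pcong F (- (pcompose k (smult \<delta> R) ^ (q - 2)
                          * pcompose (linq q H) (pcompose f (smult \<delta> R))))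
                (monom 1 q - [:0, 1:])"
    obtain r where "h * H - 1 = (monom 1 n - 1) * r"
      using H unfolding pcong_def by (elim dvdE)
    then have Hw: "h * H - 1 = ga n a * ([:-a, 1:] * r)"
      by (simp only: xn_minus_1_eq ac_simps)
    show "(\<forall>x. P0_map R F H (P_map x) = x) \<and> (\<forall>x. P_map (P0_map R F H x) = x)"
      using pcong_imp_poly_eq_on_subfq[OF F]
      by (intro P0_map_inverse[OF assms(2) R Hw]) (simp add: poly_pcompose)
  qed
qed

lemma inverse_if_char_not_dvd:
  assumes "of_nat n \<noteq> (0 :: 'a)" "bij P_map"
    and R: "\<forall>y\<in>subfq q. poly R y \<in> subfq q \<and> Q_map (poly R y) = y \<and> poly R (Q_map y) = y"
  shows "\<exists>!H. (\<forall>i. coeff H i \<in> subfq q) \<and> (H = 0 \<or> degree H + 2 \<le> n) \<and> pcong (h * H) 1 (ga n a)" (is ?ex1)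
    and "\<forall>H F. (\<forall>i. coeff H i \<in> subfq q) \<and> (H = 0 \<or> degree H + 2 \<le> n) \<and> pcong (h * H) 1 (ga n a)
           \<and> pcong F (pcompose (- (k ^ (q - 2) * pcompose (linq q H) f)
                                 + smult (a * (1 - poly h a * poly H a) / of_nat n) [:0, 1:])
                               (smult \<delta> R))
                   (monom 1 q - [:0, 1:])
           \<longrightarrow> (\<forall>x. P0_map R F H (P_map x) = x) \<and> (\<forall>x. P_map (P0_map R F H x) = x)" (is ?inverse)
proof -
  have "coprime h (ga n a)"
    using assms(2) bij_P_map_iff by (simp add: coprime_iff_gcd_eq_1)
  moreover have "(H = 0 \<or> degree H < degree (ga n a)) \<longleftrightarrow> (H = 0 \<or> degree H + 2 \<le> n)"
    for H :: "'a poly"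
    using n_pos by (auto simp: degree_ga)
  ultimately show ?ex1
    using ex1_inverse_mod_subfq[OF q_pos power_q_add _ ga_nonzero h_coeffs_in_subfq
        ga_coeffs_in_subfq] by simp
next
  show ?inverse
  proof (intro allI impI, elim conjE)
    fix H F :: "'a poly"
    assume H: "pcong (h * H) 1 (ga n a)"
      and F: "pcong F (pcompose (- (k ^ (q - 2) * pcompose (linq q H) f)
                                 + smult (a * (1 - poly h a * poly H a) / of_nat n) [:0, 1:])
                               (smult \<delta> R))
                (monom 1 q - [:0, 1:])"
    obtain w where Hw: "h * H - 1 = ga n a * w"
      using H unfolding pcong_def by (elim dvdE)
    (* evaluate h * H - 1 = ga n a * w at a, where ga n a has the value n / a *)
    have "a * (1 - poly h a * poly H a) / of_nat n = - poly w a"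
      using arg_cong[OF Hw, of "\<lambda>u. poly u a"] assms(1) a_nonzero by (simp add: poly_ga_self field_simps)
    then show "(\<forall>x. P0_map R F H (P_map x) = x) \<and> (\<forall>x. P_map (P0_map R F H x) = x)"
      using pcong_imp_poly_eq_on_subfq[OF F]
      by (intro P0_map_inverse[OF assms(2) R Hw]) (simp add: poly_pcompose)
  qed
qed

end

theorem theorem3p9:
  fixes p q n :: nat and a \<delta> :: "'a::{field_gcd,finite}"
    and f h k :: "'a poly"
  assumes "prime p" and "\<exists>e>0. q = p ^ e" and "n > 0"
    and "CARD('a) = q ^ n"
    and "a \<in> subfq q" and "a ^ n = 1"
    and "\<delta> \<noteq> 0" and "\<delta> ^ q = a * \<delta>"
    and "\<forall>i. coeff h i \<in> subfq q"
    and "\<forall>x\<in>subfq q. poly k (\<delta> * x) \<in> subfq q - {0}"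
  defines "Lg \<equiv> poly (linq q (ga n a))"
  defines "P \<equiv> (\<lambda>x. poly f (Lg x) + poly k (Lg x) * poly (linq q h) x)"
  defines "P0 \<equiv> (\<lambda>R F H x. poly F (inverse \<delta> * Lg x)
              + (poly k (\<delta> * poly R (inverse \<delta> * Lg x))) ^ (q - 2) * poly (linq q H) x)"
  shows "(bij P \<longleftrightarrow>
           (gcd h (ga n a) = 1 \<and> bij_betw (Qbar q n a \<delta> f h k) (subfq q) (subfq q)))
    \<and> (bij P \<longrightarrow>
         (\<forall>R. (\<forall>y\<in>subfq q. poly R y \<in> subfq q \<and> Qbar q n a \<delta> f h k (poly R y) = y
                              \<and> poly R (Qbar q n a \<delta> f h k y) = y) \<longrightarrow>
           (p dvd n \<longrightarrow>
              (\<exists>!H. (\<forall>i. coeff H i \<in> subfq q) \<and> degree H + 1 \<le> n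
                     \<and> pcong (h * H) 1 (monom 1 n - 1)) \<and>
              (\<forall>H F. (\<forall>i. coeff H i \<in> subfq q) \<and> degree H + 1 \<le> n
                     \<and> pcong (h * H) 1 (monom 1 n - 1)
                     \<and> pcong F (- (pcompose k (smult \<delta> R) ^ (q - 2)
                                   * pcompose (linq q H) (pcompose f (smult \<delta> R))))
                             (monom 1 q - [:0, 1:])
                     \<longrightarrow> (\<forall>x. P0 R F H (P x) = x) \<and> (\<forall>x. P (P0 R F H x) = x))) \<and>
           (\<not> p dvd n \<longrightarrow>
              (\<exists>!H. (\<forall>i. coeff H i \<in> subfq q) \<and> (H = 0 \<or> degree H + 2 \<le> n)
                     \<and> pcong (h * H) 1 (ga n a)) \<and>
              (\<forall>H F. (\<forall>i. coeff H i \<in> subfq q) \<and> (H = 0 \<or> degree H + 2 \<le> n)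
                     \<and> pcong (h * H) 1 (ga n a)
                     \<and> pcong F (pcompose (- (k ^ (q - 2) * pcompose (linq q H) f)
                                   + smult (a * (1 - poly h a * poly H a) / of_nat n) [:0, 1:])
                                  (smult \<delta> R))
                             (monom 1 q - [:0, 1:])
                     \<longrightarrow> (\<forall>x. P0 R F H (P x) = x) \<and> (\<forall>x. P (P0 R F H x) = x)))))"
proof -
  obtain e where e: "e > 0" "q = p ^ e"
    using assms(2) by blast
  have char: "CHAR('a) = p"
    using CHAR_eq_prime_of_card[OF assms(1), of "e * n"] assms(3,4) e by (simp add: power_mult)
  have "q > 1"
    using one_less_power[OF prime_gt_1_nat[OF assms(1)] e(1)] e(2) by simp
  interpret perm_setting q n a \<delta> f h k
  proof
    show "(x + y) ^ q = x ^ q + y ^ q" for x y :: 'a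
      using freshmans_dream'[of q e x y] char assms(1) e by simp
  qed (use assms \<open>q > 1\<close> in simp_all)
  have "p dvd n \<longleftrightarrow> of_nat n = (0 :: 'a)"
    using char by (simp add: of_nat_eq_0_iff_char_dvd)
  then show ?thesis
    unfolding Lg_def P_def P0_def
    using bij_P_map_iff inverse_if_char_dvd inverse_if_char_not_dvd by auto
qed

end
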